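(* Let $\Lambda$ be a finite group generated by a symmetric subset $S\subset\Lambda$ with $\delta:=\big\|\frac1{|S|}\sum_{g\in S}\lambda^0(g)\big\|<1$. Suppose $(\alpha_g)_{g\in S}$ are complex numbers of modulus $1$ and $\xi\in\ell_2\Lambda$ is a unit vector such that $\varepsilon:=\max_{g\in S}\|\lambda(g)\xi-\alpha_g\xi\|>0$. Then there is a (unitary, one-dimensional) character $\chi$ of $\Lambda$ with $$\max_{g\in S}|\bar\chi(g)-\alpha_g|\le\Big(\frac{100\varepsilon}{1-\delta}\Big)^{1/2}.$$
   Context: $\lambda$ is the left regular representation of $\Lambda$ on $\ell_2\Lambda$ and $\lambda^0$ is its restriction to $\ell_2\Lambda\ominus\mathbb C\mathbf 1$ (the orthogonal complement of the constant functions). A character means a group homomorphism $\Lambda\to\{z\in\mathbb C:|z|=1\}$. *)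

theory Defs
  imports "HOL-Algebra.Group" "HOL-Algebra.Generated_Groups" "HOL-Analysis.Analysis"
begin

text \<open>The Hilbert space l2 of a finite group G is modelled by functions
  'a => complex, only their values on carrier G matter.\<close>

definition l2norm :: "('a, 'b) monoid_scheme \<Rightarrow> ('a \<Rightarrow> complex) \<Rightarrow> real" where
  "l2norm G \<xi> = sqrt (\<Sum>h\<in>carrier G. (cmod (\<xi> h))\<^sup>2)"

definition lreg :: "('a, 'b) monoid_scheme \<Rightarrow> 'a \<Rightarrow> ('a \<Rightarrow> complex) \<Rightarrow> ('a \<Rightarrow> complex)" where
  "lreg G g \<xi> = (\<lambda>h. \<xi> (inv\<^bsub>G\<^esub> g \<otimes>\<^bsub>G\<^esub> h))"

definition avg_op :: "('a, 'b) monoid_scheme \<Rightarrow> 'a set \<Rightarrow> ('a \<Rightarrow> complex) \<Rightarrow> ('a \<Rightarrow> complex)" where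
  "avg_op G S \<xi> = (\<lambda>h. (\<Sum>g\<in>S. lreg G g \<xi> h) / of_nat (card S))"

text \<open>Operator norm of (1/|S|) sum_{g in S} lambda^0(g), i.e. of the averaging operator
  restricted to the orthogonal complement of the constants (functions with zero sum).\<close>
definition lambda0_avg_norm :: "('a, 'b) monoid_scheme \<Rightarrow> 'a set \<Rightarrow> real" where
  "lambda0_avg_norm G S =
     Sup {l2norm G (avg_op G S \<xi>) | \<xi>. (\<Sum>h\<in>carrier G. \<xi> h) = 0 \<and> l2norm G \<xi> \<le> 1}"

definition is_character :: "('a, 'b) monoid_scheme \<Rightarrow> ('a \<Rightarrow> complex) \<Rightarrow> bool" where
  "is_character G \<phi> \<longleftrightarrow> (\<forall>g\<in>carrier G. cmod (\<phi> g) = 1) \<and>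
     (\<forall>g\<in>carrier G. \<forall>h\<in>carrier G. \<phi> (g \<otimes>\<^bsub>G\<^esub> h) = \<phi> g * \<phi> h)"

end

theory Submission
  imports Defs
begin

text \<open>
  Proof idea (Lemma A.4 of the paper).  Write n = |G| and, for y in G, consider the
  correlation function corr y h = xi(h) * cnj (xi (h y)) with mean corr_mean y.

  1. Spectral gap.  corr y - corr_mean y has zero sum, so the gap of the averaging operator
     bounds its norm by the average of its left-translation defects; these in turn are
     controlled by the almost-invariance of xi.  Consequently the defect
     E = sum_y ||corr y - corr_mean y||^2 satisfies (1 - delta)^2 E <= 4 eps^2.
  2. The positive quadratic form Q(f) = (1/n) sum_x |<rho(x) xi, f>|^2 (rho the right
     regular representation) commutes with left translations and differs from
     |<xi, f>|^2 by at most sqrt E ||f||^2.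
  3. Let f0 be a maximiser of Q on the unit sphere.  If sqrt E < 1/4, every maximiser
     orthogonal to xi vanishes; as combinations of left translates of f0 are maximisers,
     f0 is an eigenvector of every left translation, i.e. a multiple of a character chi,
     and |<xi, f0>|^2 >= 1/2.
  4. Then |cnj (chi g) - alpha g| |<xi, f0>| = |<lambda(g) xi - alpha g xi, f0>| <= eps.
     If instead 8 eps >= 1 - delta, the trivial character already satisfies the bound.

  The theorem combines the main case with the trivial one.
\<close>

section \<open>The Hilbert space of functions on a finite carrier\<close>

definition l2inner :: "('a, 'b) monoid_scheme \<Rightarrow> ('a \<Rightarrow> complex) \<Rightarrow> ('a \<Rightarrow> complex) \<Rightarrow> complex" where
  "l2inner G f g = (\<Sum>h\<in>carrier G. f h * cnj (g h))"

definition l2sq :: "('a, 'b) monoid_scheme \<Rightarrow> ('a \<Rightarrow> complex) \<Rightarrow> real" where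
  "l2sq G f = (\<Sum>h\<in>carrier G. (cmod (f h))\<^sup>2)"

lemma l2sq_nonneg: "l2sq G f \<ge> 0"
  by (simp add: l2sq_def sum_nonneg)

lemma l2norm_eq_sqrt: "l2norm G f = sqrt (l2sq G f)"
  by (simp add: l2norm_def l2sq_def)

lemma l2norm_squared: "(l2norm G f)\<^sup>2 = l2sq G f"
  by (simp add: l2norm_eq_sqrt l2sq_nonneg)

lemma l2norm_nonneg: "l2norm G f \<ge> 0"
  by (simp add: l2norm_eq_sqrt l2sq_nonneg)

lemma l2norm_le_iff_l2sq_le: "\<epsilon> \<ge> 0 \<Longrightarrow> l2norm G f \<le> \<epsilon> \<longleftrightarrow> l2sq G f \<le> \<epsilon>\<^sup>2"
  by (metis abs_of_nonneg l2norm_eq_sqrt real_sqrt_abs real_sqrt_le_iff)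

lemma l2sq_as_inner: "complex_of_real (l2sq G f) = l2inner G f f"
  unfolding l2sq_def l2inner_def of_real_sum complex_norm_square ..

lemma l2sq_cong: "(\<And>h. h \<in> carrier G \<Longrightarrow> f h = g h) \<Longrightarrow> l2sq G f = l2sq G g"
  unfolding l2sq_def by (intro sum.cong refl) simp_all

lemma l2sq_scale: "l2sq G (\<lambda>h. c * f h) = (cmod c)\<^sup>2 * l2sq G f"
  by (simp add: l2sq_def norm_mult power_mult_distrib sum_distrib_left)

lemma l2norm_scale: "l2norm G (\<lambda>h. c * f h) = cmod c * l2norm G f"
  by (simp add: l2norm_eq_sqrt l2sq_scale real_sqrt_mult)

lemma l2sq_eq_0_iff:
  assumes "finite (carrier G)"
  shows "l2sq G f = 0 \<longleftrightarrow> (\<forall>h\<in>carrier G. f h = 0)"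
  unfolding l2sq_def using assms by (subst sum_nonneg_eq_0_iff) auto

lemma l2norm_triangle: "l2norm G (\<lambda>h. f h + g h) \<le> l2norm G f + l2norm G g"
proof -
  have "L2_set (\<lambda>h. cmod (f h + g h)) (carrier G)
      \<le> L2_set (\<lambda>h. cmod (f h) + cmod (g h)) (carrier G)"
    by (rule L2_set_mono) (auto simp: norm_triangle_ineq)
  also have "\<dots> \<le> L2_set (\<lambda>h. cmod (f h)) (carrier G) + L2_set (\<lambda>h. cmod (g h)) (carrier G)"
    by (rule L2_set_triangle_ineq)
  finally show ?thesis by (simp add: l2norm_def L2_set_def)
qed

lemma l2inner_Cauchy_Schwarz: "cmod (l2inner G f g) \<le> l2norm G f * l2norm G g"
proof -
  have "cmod (l2inner G f g) \<le> (\<Sum>h\<in>carrier G. \<bar>cmod (f h)\<bar> * \<bar>cmod (g h)\<bar>)"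
    unfolding l2inner_def by (rule order_trans[OF norm_sum]) (simp add: norm_mult)
  also have "\<dots> \<le> l2norm G f * l2norm G g"
    unfolding l2norm_def L2_set_def[symmetric] by (rule L2_set_mult_ineq)
  finally show ?thesis .
qed

lemma l2inner_cnj: "cnj (l2inner G f g) = l2inner G g f"
  unfolding l2inner_def cnj_sum by (simp add: mult.commute)

lemma l2inner_lincomb:
  "l2inner G (\<lambda>h. a * u h + b * v h) w = a * l2inner G u w + b * l2inner G v w"
  unfolding l2inner_def by (simp add: algebra_simps sum.distrib sum_distrib_left)

lemma l2sq_add_scaled:
  "complex_of_real (l2sq G (\<lambda>h. u h + c * v h))
     = complex_of_real (l2sq G u) + cnj c * l2inner G u v + c * cnj (l2inner G u v)
       + c * cnj c * complex_of_real (l2sq G v)"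
  unfolding l2sq_as_inner l2inner_def cnj_sum
  by (simp add: algebra_simps sum.distrib sum_distrib_left)

lemma square_of_mean_le:
  fixes a :: "'c \<Rightarrow> complex"
  assumes "finite S" "S \<noteq> {}"
  shows "(cmod ((\<Sum>g\<in>S. a g) / of_nat (card S)))\<^sup>2 \<le> (\<Sum>g\<in>S. (cmod (a g))\<^sup>2) / card S"
proof -
  have cS: "card S > 0" using assms by (simp add: card_gt_0_iff)
  have "cmod (\<Sum>g\<in>S. a g) \<le> (\<Sum>g\<in>S. \<bar>1\<bar> * \<bar>cmod (a g)\<bar>)"
    by (simp add: norm_sum)
  also have "\<dots> \<le> L2_set (\<lambda>_. 1) S * L2_set (\<lambda>g. cmod (a g)) S"
    by (rule L2_set_mult_ineq)
  finally have "cmod (\<Sum>g\<in>S. a g) \<le> sqrt (card S) * sqrt (\<Sum>g\<in>S. (cmod (a g))\<^sup>2)"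
    by (simp add: L2_set_def)
  hence "(cmod (\<Sum>g\<in>S. a g))\<^sup>2 \<le> card S * (\<Sum>g\<in>S. (cmod (a g))\<^sup>2)"
    by (metis norm_ge_zero power_mono real_sqrt_mult real_sqrt_pow2 of_nat_0_le_iff
        sum_nonneg zero_le_power2 mult_nonneg_nonneg)
  thus ?thesis
    using cS by (simp add: norm_divide power_divide field_simps power2_eq_square)
qed

lemma cmod_sum_sq_le: "(cmod (u + v))\<^sup>2 \<le> 2 * (cmod u)\<^sup>2 + 2 * (cmod v)\<^sup>2"
proof -
  have "(cmod (u + v))\<^sup>2 \<le> (cmod u + cmod v)\<^sup>2"
    by (intro power_mono norm_triangle_ineq) auto
  also have "\<dots> \<le> 2 * (cmod u)\<^sup>2 + 2 * (cmod v)\<^sup>2"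
    using zero_le_power2[of "cmod u - cmod v"] unfolding power2_eq_square by (simp add: algebra_simps)
  finally show ?thesis .
qed

context group
begin

lemma sum_left_translate: "g \<in> carrier G \<Longrightarrow> (\<Sum>h\<in>carrier G. F (g \<otimes> h)) = sum F (carrier G)"
  by (rule sum.reindex_bij_witness[of _ "\<lambda>h. inv g \<otimes> h" "\<lambda>h. g \<otimes> h"])
     (auto simp: m_assoc[symmetric])

lemma sum_right_translate: "g \<in> carrier G \<Longrightarrow> (\<Sum>h\<in>carrier G. F (h \<otimes> g)) = sum F (carrier G)"
  by (rule sum.reindex_bij_witness[of _ "\<lambda>h. h \<otimes> inv g" "\<lambda>h. h \<otimes> g"])
     (auto simp: m_assoc)

lemma l2sq_left_translate: "y \<in> carrier G \<Longrightarrow> l2sq G (\<lambda>h. f (y \<otimes> h)) = l2sq G f"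
  unfolding l2sq_def by (rule sum_left_translate)

end

section \<open>The averaging operator and its spectral gap\<close>

locale finite_group = group G for G (structure) + assumes finite_carrier: "finite (carrier G)"

locale averaging = finite_group + fixes S assumes S_sub: "S \<subseteq> carrier G" and S_ne: "S \<noteq> {}"
begin

lemma finite_S: "finite S"
  using S_sub finite_carrier finite_subset by blast

lemma card_S_pos: "card S > 0"
  using finite_S S_ne by (simp add: card_gt_0_iff)

text \<open>The averaging operator is a contraction, being an average of unitaries.\<close>
lemma avg_op_contraction: "l2norm G (avg_op G S f) \<le> l2norm G f"
proof -
  have "l2sq G (avg_op G S f) \<le> (\<Sum>h\<in>carrier G. (\<Sum>g\<in>S. (cmod (f (inv g \<otimes> h)))\<^sup>2) / card S)"
    unfolding l2sq_def avg_op_def lreg_def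
    by (rule sum_mono, rule square_of_mean_le[OF finite_S S_ne])
  also have "\<dots> = (\<Sum>g\<in>S. \<Sum>h\<in>carrier G. (cmod (f (inv g \<otimes> h)))\<^sup>2) / card S"
    by (simp add: sum_divide_distrib[symmetric] sum.swap[of _ S])
  also have "\<dots> = (\<Sum>g\<in>S. l2sq G f) / card S"
    unfolding l2sq_def using S_sub
    by (intro arg_cong2[where f="(/)"] sum.cong refl sum_left_translate) auto
  also have "\<dots> = l2sq G f" using card_S_pos by simp
  finally show ?thesis by (simp add: l2norm_eq_sqrt)
qed

text \<open>delta bounds every value in its defining supremum, which is bounded by contractivity.\<close>
lemma lambda0_avg_norm_upper:
  assumes "(\<Sum>h\<in>carrier G. f h) = 0" and "l2norm G f \<le> 1"
  shows "l2norm G (avg_op G S f) \<le> lambda0_avg_norm G S"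
  unfolding lambda0_avg_norm_def using assms avg_op_contraction
  by (intro cSup_upper bdd_aboveI[of _ 1]) (auto intro: order_trans)

lemma lambda0_avg_norm_nonneg: "lambda0_avg_norm G S \<ge> 0"
  using lambda0_avg_norm_upper[of "\<lambda>_. 0"] l2norm_nonneg
  by (simp add: l2norm_def avg_op_def lreg_def)

lemma spectral_gap:
  assumes zero_sum: "(\<Sum>h\<in>carrier G. f h) = 0"
  shows "l2norm G (avg_op G S f) \<le> lambda0_avg_norm G S * l2norm G f"
proof (cases "l2norm G f = 0")
  case True
  hence "\<forall>h\<in>carrier G. f h = 0"
    by (simp add: l2norm_eq_sqrt l2sq_eq_0_iff[OF finite_carrier])
  hence "l2sq G (avg_op G S f) = 0"
    unfolding l2sq_def avg_op_def lreg_def using S_sub by (auto intro!: sum.neutral simp: subsetD)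
  thus ?thesis using True by (simp add: l2norm_eq_sqrt)
next
  case False
  define s where "s = l2norm G f"
  have s_pos: "s > 0" using False l2norm_nonneg[of G f] s_def by simp
  have avg_scale: "avg_op G S (\<lambda>h. c * f h) = (\<lambda>h. c * avg_op G S f h)" for c
    by (simp add: avg_op_def lreg_def sum_distrib_left)
  have "(\<Sum>h\<in>carrier G. complex_of_real (1/s) * f h) = 0"
    using zero_sum by (simp only: sum_distrib_left[symmetric]) simp
  moreover have "l2norm G (\<lambda>h. complex_of_real (1/s) * f h) \<le> 1"
    unfolding l2norm_scale using s_pos s_def by (simp add: norm_divide)
  ultimately have "l2norm G (avg_op G S (\<lambda>h. complex_of_real (1/s) * f h)) \<le> lambda0_avg_norm G S"
    by (rule lambda0_avg_norm_upper)
  thus ?thesis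
    unfolding avg_scale l2norm_scale using s_pos s_def
    by (simp add: norm_divide divide_le_eq mult.commute)
qed

lemma zero_sum_poincare:
  assumes zero_sum: "(\<Sum>h\<in>carrier G. \<phi> h) = 0" and gap_lt_1: "lambda0_avg_norm G S < 1"
  shows "(1 - lambda0_avg_norm G S)\<^sup>2 * l2sq G \<phi>
     \<le> (\<Sum>g\<in>S. l2sq G (\<lambda>h. \<phi> h - \<phi> (inv g \<otimes> h))) / card S"
proof -
  define \<delta> where "\<delta> = lambda0_avg_norm G S"
  define \<rho> where "\<rho> = (\<lambda>h. \<phi> h - avg_op G S \<phi> h)"
  have \<rho>_eq: "\<rho> h = (\<Sum>g\<in>S. \<phi> h - \<phi> (inv g \<otimes> h)) / of_nat (card S)" for h
    using card_S_pos
    by (simp add: \<rho>_def avg_op_def lreg_def sum_subtractf field_simps)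
  have "l2sq G \<rho> \<le> (\<Sum>h\<in>carrier G. (\<Sum>g\<in>S. (cmod (\<phi> h - \<phi> (inv g \<otimes> h)))\<^sup>2) / card S)"
    unfolding l2sq_def \<rho>_eq by (rule sum_mono, rule square_of_mean_le[OF finite_S S_ne])
  also have "\<dots> = (\<Sum>g\<in>S. l2sq G (\<lambda>h. \<phi> h - \<phi> (inv g \<otimes> h))) / card S"
    unfolding l2sq_def by (simp add: sum_divide_distrib[symmetric] sum.swap[of _ S])
  finally have defects: "l2sq G \<rho> \<le> \<dots>" .
  have "l2norm G \<phi> \<le> l2norm G \<rho> + l2norm G (avg_op G S \<phi>)"
    using l2norm_triangle[of G \<rho> "avg_op G S \<phi>"] by (simp add: \<rho>_def)
  with spectral_gap[OF zero_sum] have "(1 - \<delta>) * l2norm G \<phi> \<le> l2norm G \<rho>"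
    by (simp add: \<delta>_def algebra_simps)
  hence "((1 - \<delta>) * l2norm G \<phi>)\<^sup>2 \<le> (l2norm G \<rho>)\<^sup>2"
    using gap_lt_1 \<delta>_def l2norm_nonneg[of G \<phi>] by (intro power_mono) auto
  thus ?thesis
    using defects by (simp add: \<delta>_def power_mult_distrib l2norm_squared)
qed

end

section \<open>Correlation functions and the defect of xi\<close>

context finite_group
begin

lemma card_carrier_pos: "card (carrier G) > 0"
  using finite_carrier by (auto simp: card_gt_0_iff)

definition corr :: "('a \<Rightarrow> complex) \<Rightarrow> 'a \<Rightarrow> 'a \<Rightarrow> complex" where
  "corr \<xi> y h = \<xi> h * cnj (\<xi> (h \<otimes> y))"

definition corr_mean :: "('a \<Rightarrow> complex) \<Rightarrow> 'a \<Rightarrow> complex" where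
  "corr_mean \<xi> y = (\<Sum>h\<in>carrier G. corr \<xi> y h) / of_nat (card (carrier G))"

text \<open>The defect measures how far the rank-one kernel xi(h) cnj(xi(k)) is from its
  average over right translations, a kernel depending only on inv h \<otimes> k.\<close>
definition defect :: "('a \<Rightarrow> complex) \<Rightarrow> real" where
  "defect \<xi> = (\<Sum>h\<in>carrier G. \<Sum>k\<in>carrier G.
      (cmod (\<xi> h * cnj (\<xi> k) - corr_mean \<xi> (inv h \<otimes> k)))\<^sup>2)"

lemma corr_minus_mean_zero_sum: "(\<Sum>h\<in>carrier G. corr \<xi> y h - corr_mean \<xi> y) = 0"
  using card_carrier_pos by (simp add: sum_subtractf corr_mean_def)

lemma defect_eq_sum_corr: "defect \<xi> = (\<Sum>y\<in>carrier G. l2sq G (\<lambda>h. corr \<xi> y h - corr_mean \<xi> y))"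
proof -
  have "defect \<xi> = (\<Sum>h\<in>carrier G. \<Sum>y\<in>carrier G. (cmod (corr \<xi> y h - corr_mean \<xi> y))\<^sup>2)"
    unfolding defect_def
  proof (rule sum.cong[OF refl])
    fix h assume h: "h \<in> carrier G"
    show "(\<Sum>k\<in>carrier G. (cmod (\<xi> h * cnj (\<xi> k) - corr_mean \<xi> (inv h \<otimes> k)))\<^sup>2)
        = (\<Sum>y\<in>carrier G. (cmod (corr \<xi> y h - corr_mean \<xi> y))\<^sup>2)"
      using sum_left_translate[OF h, of "\<lambda>k. (cmod (\<xi> h * cnj (\<xi> k) - corr_mean \<xi> (inv h \<otimes> k)))\<^sup>2"] h
      by (simp add: corr_def m_assoc[symmetric])
  qed
  also have "\<dots> = (\<Sum>y\<in>carrier G. l2sq G (\<lambda>h. corr \<xi> y h - corr_mean \<xi> y))"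
    unfolding l2sq_def by (rule sum.swap)
  finally show ?thesis .
qed

lemma corr_translation_defect:
  assumes g: "g \<in> carrier G" and a: "cmod a = 1" and unit: "l2sq G \<xi> = 1"
  shows "(\<Sum>y\<in>carrier G. l2sq G (\<lambda>h. corr \<xi> y h - corr \<xi> y (inv g \<otimes> h)))
     \<le> 4 * l2sq G (\<lambda>h. lreg G g \<xi> h - a * \<xi> h)"
proof -
  define g' where "g' = inv g"
  have g': "g' \<in> carrier G" using g g'_def by simp
  define d where "d = (\<lambda>h. \<xi> (g' \<otimes> h) - a * \<xi> h)"
  define H where "H = (\<lambda>h k. (cmod (\<xi> h * cnj (\<xi> k) - \<xi> (g' \<otimes> h) * cnj (\<xi> (g' \<otimes> k))))\<^sup>2)"
  have a_cnj: "a * cnj a = 1"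
    using a by (metis complex_norm_square of_real_1 power_one)
  have "(\<Sum>y\<in>carrier G. l2sq G (\<lambda>h. corr \<xi> y h - corr \<xi> y (inv g \<otimes> h)))
      = (\<Sum>h\<in>carrier G. \<Sum>y\<in>carrier G. H h (h \<otimes> y))"
    unfolding l2sq_def
    by (subst sum.swap) (auto simp: H_def corr_def g'_def m_assoc g intro!: sum.cong)
  also have "\<dots> = (\<Sum>h\<in>carrier G. \<Sum>k\<in>carrier G. H h k)"
    by (intro sum.cong refl sum_left_translate)
  also have "\<dots> \<le> (\<Sum>h\<in>carrier G. \<Sum>k\<in>carrier G.
      2 * (cmod (d h))\<^sup>2 * (cmod (\<xi> (g' \<otimes> k)))\<^sup>2 + 2 * (cmod (\<xi> h))\<^sup>2 * (cmod (d k))\<^sup>2)"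
  proof (intro sum_mono)
    fix h k
    have "\<xi> h * cnj (\<xi> k) - \<xi> (g' \<otimes> h) * cnj (\<xi> (g' \<otimes> k))
       = - (d h * cnj (\<xi> (g' \<otimes> k)) + a * \<xi> h * cnj (d k))"
      unfolding d_def using a_cnj by (simp add: algebra_simps)
    hence "H h k \<le> 2 * (cmod (d h * cnj (\<xi> (g' \<otimes> k))))\<^sup>2 + 2 * (cmod (a * \<xi> h * cnj (d k)))\<^sup>2"
      unfolding H_def norm_minus_cancel by (metis cmod_sum_sq_le norm_minus_cancel)
    thus "H h k \<le> 2 * (cmod (d h))\<^sup>2 * (cmod (\<xi> (g' \<otimes> k)))\<^sup>2 + 2 * (cmod (\<xi> h))\<^sup>2 * (cmod (d k))\<^sup>2"
      by (simp add: norm_mult a power_mult_distrib)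
  qed
  also have "\<dots> = 2 * l2sq G d * l2sq G (\<lambda>k. \<xi> (g' \<otimes> k)) + 2 * l2sq G \<xi> * l2sq G d"
    unfolding sum.distrib l2sq_def
    by (simp add: sum_product[symmetric] sum_distrib_left[symmetric] sum_distrib_right[symmetric] mult.assoc)
  also have "\<dots> = 4 * l2sq G d"
    using l2sq_left_translate[OF g'] unit by simp
  finally show ?thesis
    by (simp add: lreg_def d_def g'_def)
qed

end

context averaging
begin

lemma defect_bound:
  assumes gap_lt_1: "lambda0_avg_norm G S < 1" and unit: "l2sq G \<xi> = 1"
    and unimodular: "\<forall>g\<in>S. cmod (\<alpha> g) = 1"
    and almost_inv: "\<forall>g\<in>S. l2norm G (\<lambda>h. lreg G g \<xi> h - \<alpha> g * \<xi> h) \<le> \<epsilon>"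
  shows "(1 - lambda0_avg_norm G S)\<^sup>2 * defect \<xi> \<le> 4 * \<epsilon>\<^sup>2"
proof -
  define D where "D = (\<lambda>g y. l2sq G (\<lambda>h. corr \<xi> y h - corr \<xi> y (inv g \<otimes> h)))"
  have "\<epsilon> \<ge> 0" using almost_inv S_ne l2norm_nonneg by (meson all_not_in_conv order_trans)
  have "(1 - lambda0_avg_norm G S)\<^sup>2 * defect \<xi>
      = (\<Sum>y\<in>carrier G. (1 - lambda0_avg_norm G S)\<^sup>2 * l2sq G (\<lambda>h. corr \<xi> y h - corr_mean \<xi> y))"
    by (simp add: defect_eq_sum_corr sum_distrib_left)
  also have "\<dots> \<le> (\<Sum>y\<in>carrier G. (\<Sum>g\<in>S. D g y) / card S)"
    unfolding D_def
    by (intro sum_mono order_trans[OF zero_sum_poincare[OF corr_minus_mean_zero_sum gap_lt_1]])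
       simp
  also have "\<dots> = (\<Sum>g\<in>S. \<Sum>y\<in>carrier G. D g y) / card S"
    by (simp add: sum_divide_distrib[symmetric] sum.swap[of _ S])
  also have "\<dots> \<le> (\<Sum>g\<in>S. 4 * \<epsilon>\<^sup>2) / card S"
  proof (intro divide_right_mono sum_mono)
    fix g assume g: "g \<in> S"
    have "(\<Sum>y\<in>carrier G. D g y) \<le> 4 * l2sq G (\<lambda>h. lreg G g \<xi> h - \<alpha> g * \<xi> h)"
      unfolding D_def using g S_sub unimodular unit by (intro corr_translation_defect) auto
    also have "\<dots> \<le> 4 * \<epsilon>\<^sup>2"
      using almost_inv g l2norm_le_iff_l2sq_le[OF \<open>\<epsilon> \<ge> 0\<close>] by auto
    finally show "(\<Sum>y\<in>carrier G. D g y) \<le> 4 * \<epsilon>\<^sup>2" .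
  qed simp
  also have "\<dots> = 4 * \<epsilon>\<^sup>2" using card_S_pos by simp
  finally show ?thesis .
qed

end

section \<open>The quadratic form of the right translates of xi\<close>

context finite_group
begin

definition rcoef :: "('a \<Rightarrow> complex) \<Rightarrow> ('a \<Rightarrow> complex) \<Rightarrow> 'a \<Rightarrow> complex" where
  "rcoef \<xi> f x = (\<Sum>h\<in>carrier G. \<xi> (x \<otimes> h) * cnj (f h))"

definition qform :: "('a \<Rightarrow> complex) \<Rightarrow> ('a \<Rightarrow> complex) \<Rightarrow> real" where
  "qform \<xi> f = (\<Sum>x\<in>carrier G. (cmod (rcoef \<xi> f x))\<^sup>2) / card (carrier G)"

definition qform_pair :: "('a \<Rightarrow> complex) \<Rightarrow> ('a \<Rightarrow> complex) \<Rightarrow> ('a \<Rightarrow> complex) \<Rightarrow> complex" where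
  "qform_pair \<xi> u v = (\<Sum>x\<in>carrier G. cnj (rcoef \<xi> u x) * rcoef \<xi> v x) / of_nat (card (carrier G))"

lemma qform_cong: "(\<And>h. h \<in> carrier G \<Longrightarrow> f h = g h) \<Longrightarrow> qform \<xi> f = qform \<xi> g"
  unfolding qform_def rcoef_def by (intro arg_cong2[where f="(/)"] sum.cong refl) simp_all

lemma qform_scale: "qform \<xi> (\<lambda>h. c * f h) = (cmod c)\<^sup>2 * qform \<xi> f"
  unfolding qform_def rcoef_def
  by (simp add: sum_distrib_left[symmetric] mult.left_commute norm_mult power_mult_distrib)

lemma qform_vanishing: "(\<And>h. h \<in> carrier G \<Longrightarrow> f h = 0) \<Longrightarrow> qform \<xi> f = 0"
  unfolding qform_def rcoef_def by simp

text \<open>qform commutes with left translations, since these commute with right translations.\<close>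
lemma qform_left_translate: "y \<in> carrier G \<Longrightarrow> qform \<xi> (\<lambda>h. f (y \<otimes> h)) = qform \<xi> f"
proof -
  assume y: "y \<in> carrier G"
  have "rcoef \<xi> (\<lambda>h. f (y \<otimes> h)) x = rcoef \<xi> f (x \<otimes> inv y)" if "x \<in> carrier G" for x
    unfolding rcoef_def using y that
    using sum_left_translate[of y "\<lambda>k. \<xi> (x \<otimes> inv y \<otimes> k) * cnj (f k)"]
    by (simp add: m_assoc[symmetric]) (simp add: m_assoc)
  thus ?thesis
    unfolding qform_def using y sum_right_translate[of "inv y" "\<lambda>x. (cmod (rcoef \<xi> f x))\<^sup>2"]
    by simp
qed

text \<open>The kernel of qform is the average of the rank-one kernels of the right translates
  of xi, which is the corr_mean kernel.\<close>
lemma corr_mean_as_average: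
  assumes h: "h \<in> carrier G" and k: "k \<in> carrier G"
  shows "(\<Sum>x\<in>carrier G. \<xi> (x \<otimes> h) * cnj (\<xi> (x \<otimes> k))) / of_nat (card (carrier G))
       = corr_mean \<xi> (inv h \<otimes> k)"
proof -
  have "(\<Sum>x\<in>carrier G. \<xi> (x \<otimes> h) * cnj (\<xi> (x \<otimes> k)))
      = (\<Sum>x\<in>carrier G. (\<lambda>z. \<xi> z * cnj (\<xi> (z \<otimes> (inv h \<otimes> k)))) (x \<otimes> h))"
    using h k by (intro sum.cong refl) (simp add: m_assoc[symmetric] r_inv, simp add: m_assoc)
  also have "\<dots> = (\<Sum>z\<in>carrier G. \<xi> z * cnj (\<xi> (z \<otimes> (inv h \<otimes> k))))"
    by (rule sum_right_translate[OF h])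
  finally show ?thesis by (simp add: corr_mean_def corr_def)
qed

lemma qform_kernel:
  "complex_of_real (qform \<xi> f)
     = (\<Sum>h\<in>carrier G. \<Sum>k\<in>carrier G. cnj (f h) * f k * corr_mean \<xi> (inv h \<otimes> k))"
proof -
  let ?n = "of_nat (card (carrier G)) :: complex"
  have "complex_of_real (qform \<xi> f) = (\<Sum>x\<in>carrier G. rcoef \<xi> f x * cnj (rcoef \<xi> f x)) / ?n"
    unfolding qform_def of_real_divide of_real_sum complex_norm_square by simp
  also have "\<dots> = (\<Sum>x\<in>carrier G. \<Sum>h\<in>carrier G. \<Sum>k\<in>carrier G.
      cnj (f h) * f k * (\<xi> (x \<otimes> h) * cnj (\<xi> (x \<otimes> k)))) / ?n"
    unfolding rcoef_def cnj_sum sum_product by (simp add: algebra_simps)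
  also have "\<dots> = (\<Sum>h\<in>carrier G. \<Sum>k\<in>carrier G. \<Sum>x\<in>carrier G.
      cnj (f h) * f k * (\<xi> (x \<otimes> h) * cnj (\<xi> (x \<otimes> k)))) / ?n"
    by (subst sum.swap, subst (2) sum.swap) simp
  also have "\<dots> = (\<Sum>h\<in>carrier G. \<Sum>k\<in>carrier G. cnj (f h) * f k *
      ((\<Sum>x\<in>carrier G. \<xi> (x \<otimes> h) * cnj (\<xi> (x \<otimes> k))) / ?n))"
    by (simp add: sum_divide_distrib sum_distrib_left)
  also have "\<dots> = (\<Sum>h\<in>carrier G. \<Sum>k\<in>carrier G. cnj (f h) * f k * corr_mean \<xi> (inv h \<otimes> k))"
    by (intro sum.cong refl) (simp add: corr_mean_as_average)
  finally show ?thesis .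
qed

lemma inner_sq_kernel:
  "complex_of_real ((cmod (l2inner G \<xi> f))\<^sup>2)
     = (\<Sum>h\<in>carrier G. \<Sum>k\<in>carrier G. cnj (f h) * f k * (\<xi> h * cnj (\<xi> k)))"
  unfolding complex_norm_square l2inner_def cnj_sum sum_product by (simp add: algebra_simps)

text \<open>Step 2 of the proof: qform differs from |<xi, f>|^2 by at most sqrt(defect) ||f||^2,
  by Cauchy--Schwarz for the difference of the two kernels.\<close>
lemma qform_approx: "\<bar>qform \<xi> f - (cmod (l2inner G \<xi> f))\<^sup>2\<bar> \<le> sqrt (defect \<xi>) * l2sq G f"
proof -
  define D where "D = (\<lambda>h k. corr_mean \<xi> (inv h \<otimes> k) - \<xi> h * cnj (\<xi> k))"
  define C where "C = carrier G"
  have "\<bar>qform \<xi> f - (cmod (l2inner G \<xi> f))\<^sup>2\<bar>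
      = cmod (complex_of_real (qform \<xi> f) - complex_of_real ((cmod (l2inner G \<xi> f))\<^sup>2))"
    by (simp only: of_real_diff[symmetric] norm_of_real)
  also have "\<dots> = cmod (\<Sum>h\<in>C. \<Sum>k\<in>C. cnj (f h) * f k * D h k)"
    unfolding qform_kernel inner_sq_kernel D_def C_def by (simp add: sum_subtractf algebra_simps)
  also have "\<dots> \<le> (\<Sum>h\<in>C. \<Sum>k\<in>C. cmod (cnj (f h) * f k * D h k))"
    by (rule order_trans[OF norm_sum sum_mono[OF norm_sum]])
  also have "\<dots> = (\<Sum>p\<in>C \<times> C. \<bar>cmod (f (fst p)) * cmod (f (snd p))\<bar> * \<bar>cmod (D (fst p) (snd p))\<bar>)"
    by (simp add: sum.cartesian_product norm_mult case_prod_beta)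
  also have "\<dots> \<le> L2_set (\<lambda>p. cmod (f (fst p)) * cmod (f (snd p))) (C \<times> C)
                 * L2_set (\<lambda>p. cmod (D (fst p) (snd p))) (C \<times> C)"
    by (rule L2_set_mult_ineq)
  also have "L2_set (\<lambda>p. cmod (f (fst p)) * cmod (f (snd p))) (C \<times> C) = l2sq G f"
  proof -
    have "(\<Sum>p\<in>C \<times> C. (cmod (f (fst p)) * cmod (f (snd p)))\<^sup>2) = (l2sq G f)\<^sup>2"
      unfolding l2sq_def C_def power2_eq_square[of "sum _ _"] sum_product
      by (simp add: sum.cartesian_product case_prod_beta power_mult_distrib)
    thus ?thesis unfolding L2_set_def using l2sq_nonneg[of G f] by simp
  qed
  also have "L2_set (\<lambda>p. cmod (D (fst p) (snd p))) (C \<times> C) = sqrt (defect \<xi>)"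
    unfolding L2_set_def defect_def C_def D_def
    by (simp add: sum.cartesian_product case_prod_beta norm_minus_commute)
  finally show ?thesis by (simp add: mult.commute)
qed

end

section \<open>A maximiser of the quadratic form\<close>

lemma cmod_le_l2norm:
  assumes "finite (carrier G)" "h \<in> carrier G"
  shows "cmod (f h) \<le> l2norm G f"
proof -
  have "(cmod (f h))\<^sup>2 \<le> l2sq G f"
    unfolding l2sq_def using assms by (intro member_le_sum) auto
  thus ?thesis by (simp add: l2norm_eq_sqrt real_le_rsqrt)
qed

text \<open>Coordinate evaluations are continuous on the product topology; registered so that
  l2sq and qform are recognised as continuous.\<close>
lemma continuous_on_coordinate [continuous_intros]:
  "continuous_on A (\<lambda>f::'a \<Rightarrow> 'b::topological_space. f h)"
  by (rule continuous_on_subset[OF continuous_on_product_coordinates]) simp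

lemma unit_sphere_compact:
  assumes "finite (carrier G)"
  shows "compact {f. (\<forall>h. h \<notin> carrier G \<longrightarrow> f h = 0) \<and> l2sq G f = 1}"
proof -
  define B where "B = (\<lambda>h. if h \<in> carrier G then cball (0::complex) 1 else {0})"
  have "compactin (product_topology (\<lambda>_. euclidean) UNIV) (Pi\<^sub>E UNIV B)"
    by (subst compactin_PiE) (auto simp: B_def)
  hence "compact (Pi\<^sub>E UNIV B)" by (simp add: euclidean_product_topology)
  moreover have "closed {f. l2sq G f = 1}"
    unfolding l2sq_def by (rule closed_Collect_eq) (auto intro!: continuous_intros)
  moreover have "f \<in> Pi\<^sub>E UNIV B \<longleftrightarrow> (\<forall>h. h \<notin> carrier G \<longrightarrow> f h = 0)" if "l2sq G f = 1" for f
    using cmod_le_l2norm[OF assms, of _ f] that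
    by (auto simp: B_def PiE_iff l2norm_eq_sqrt)
  hence "{f. (\<forall>h. h \<notin> carrier G \<longrightarrow> f h = 0) \<and> l2sq G f = 1}
      = Pi\<^sub>E UNIV B \<inter> {f. l2sq G f = 1}"
    by blast
  ultimately show ?thesis by (simp add: compact_Int_closed)
qed

context finite_group
begin

lemma qform_continuous: "continuous_on A (qform \<xi>)"
  unfolding qform_def rcoef_def using card_carrier_pos by (intro continuous_intros) auto

lemma qform_maximiser:
  assumes unit: "l2sq G \<xi> = 1"
  shows "\<exists>f0. l2sq G f0 = 1 \<and> (\<forall>f. qform \<xi> f \<le> qform \<xi> f0 * l2sq G f) \<and> qform \<xi> \<xi> \<le> qform \<xi> f0"
proof -
  define K where "K = {f. (\<forall>h. h \<notin> carrier G \<longrightarrow> f h = 0) \<and> l2sq G f = 1}"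
  define zext :: "('a \<Rightarrow> complex) \<Rightarrow> 'a \<Rightarrow> complex"
    where "zext = (\<lambda>f h. if h \<in> carrier G then f h else 0)"
  have zext: "l2sq G (zext f) = l2sq G f" "qform \<xi> (zext f) = qform \<xi> f" for f
    unfolding zext_def by (auto intro: l2sq_cong qform_cong)
  have "zext \<xi> \<in> K" using unit zext by (simp add: K_def zext_def)
  then obtain f0 where f0: "f0 \<in> K" and max: "\<forall>g\<in>K. qform \<xi> g \<le> qform \<xi> f0"
    using continuous_attains_sup[OF unit_sphere_compact[OF finite_carrier] _ qform_continuous]
    unfolding K_def by blast
  have "qform \<xi> f \<le> qform \<xi> f0 * l2sq G f" for f
  proof (cases "l2sq G f = 0")
    case True
    thus ?thesis using qform_vanishing[of f \<xi>] l2sq_eq_0_iff[OF finite_carrier, of f] by simp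
  next
    case False
    define s where "s = sqrt (l2sq G f)"
    have s_pos: "s > 0" using False l2sq_nonneg[of G f] s_def by simp
    define g where "g = zext (\<lambda>h. complex_of_real (1/s) * f h)"
    have "l2sq G g = l2sq G f / s\<^sup>2"
      unfolding g_def zext l2sq_scale using s_pos by (simp add: power_divide norm_divide)
    hence "g \<in> K" using s_pos s_def l2sq_nonneg[of G f] False by (simp add: K_def g_def zext_def)
    hence "qform \<xi> g \<le> qform \<xi> f0" using max by blast
    moreover have "qform \<xi> g = qform \<xi> f / s\<^sup>2"
      unfolding g_def zext qform_scale using s_pos by (simp add: power_divide norm_divide)
    ultimately show ?thesis using s_pos s_def l2sq_nonneg[of G f] by (simp add: divide_le_eq)
  qed
  moreover have "qform \<xi> \<xi> \<le> qform \<xi> f0" using max \<open>zext \<xi> \<in> K\<close> zext by metis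
  ultimately show ?thesis using f0 by (auto simp: K_def)
qed

lemma qform_add_scaled:
  "complex_of_real (qform \<xi> (\<lambda>h. u h + c * v h))
     = complex_of_real (qform \<xi> u) + cnj c * qform_pair \<xi> u v + c * cnj (qform_pair \<xi> u v)
       + c * cnj c * complex_of_real (qform \<xi> v)"
proof -
  have rcoef_add: "rcoef \<xi> (\<lambda>h. u h + c * v h) x = rcoef \<xi> u x + cnj c * rcoef \<xi> v x" for x
    unfolding rcoef_def by (simp add: algebra_simps sum.distrib sum_distrib_left)
  have expand: "(rcoef \<xi> u x + cnj c * rcoef \<xi> v x) * cnj (rcoef \<xi> u x + cnj c * rcoef \<xi> v x)
     = rcoef \<xi> u x * cnj (rcoef \<xi> u x) + cnj c * (cnj (rcoef \<xi> u x) * rcoef \<xi> v x)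
       + c * cnj (cnj (rcoef \<xi> u x) * rcoef \<xi> v x) + c * cnj c * (rcoef \<xi> v x * cnj (rcoef \<xi> v x))" for x
    by (simp add: algebra_simps)
  thus ?thesis
    unfolding qform_def of_real_divide of_real_sum complex_norm_square rcoef_add expand
      qform_pair_def cnj_sum sum.distrib sum_distrib_left add_divide_distrib complex_cnj_divide
    by (simp add: sum_distrib_left[symmetric] algebra_simps)
qed

lemma excess_add_scaled:
  "complex_of_real (\<mu> * l2sq G (\<lambda>h. u h + c * v h) - qform \<xi> (\<lambda>h. u h + c * v h))
     = complex_of_real (\<mu> * l2sq G u - qform \<xi> u)
       + cnj c * (of_real \<mu> * l2inner G u v - qform_pair \<xi> u v)
       + c * cnj (of_real \<mu> * l2inner G u v - qform_pair \<xi> u v)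
       + c * cnj c * complex_of_real (\<mu> * l2sq G v - qform \<xi> v)"
  unfolding of_real_diff of_real_mult l2sq_add_scaled qform_add_scaled by (simp add: algebra_simps)

text \<open>First-order condition at a maximiser u: the excess is nonnegative and vanishes at u,
  so its polarisation with any v vanishes.\<close>
lemma maximiser_first_order:
  assumes bound: "\<forall>f. qform \<xi> f \<le> \<mu> * l2sq G f" and u: "qform \<xi> u = \<mu> * l2sq G u"
  shows "of_real \<mu> * l2inner G u v = qform_pair \<xi> u v"
proof (rule ccontr)
  define p where "p = of_real \<mu> * l2inner G u v - qform_pair \<xi> u v"
  assume "of_real \<mu> * l2inner G u v \<noteq> qform_pair \<xi> u v"
  hence "p \<noteq> 0" using p_def by simp
  define q where "q = \<mu> * l2sq G v - qform \<xi> v"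
  have q_nonneg: "q \<ge> 0" using bound[rule_format, of v] q_def by linarith
  define t where "t = 1 / (q + 1)"
  have t_pos: "t > 0" and tq: "t * q < 1" using q_nonneg by (simp_all add: t_def field_simps)
  define c where "c = - (of_real t * p)"
  have "complex_of_real (\<mu> * l2sq G (\<lambda>h. u h + c * v h) - qform \<xi> (\<lambda>h. u h + c * v h))
      = cnj c * p + c * cnj p + c * cnj c * complex_of_real q"
    unfolding excess_add_scaled using u by (simp add: p_def q_def)
  also have "\<dots> = complex_of_real ((cmod p)\<^sup>2 * (t * (t * q - 2)))"
    unfolding c_def of_real_mult of_real_diff complex_norm_square by (simp add: algebra_simps)
  finally have "\<mu> * l2sq G (\<lambda>h. u h + c * v h) - qform \<xi> (\<lambda>h. u h + c * v h)
      = (cmod p)\<^sup>2 * (t * (t * q - 2))"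
    by (simp only: of_real_eq_iff)
  hence "(cmod p)\<^sup>2 * (t * (t * q - 2)) \<ge> 0"
    using bound[rule_format, of "\<lambda>h. u h + c * v h"] by linarith
  moreover have "(cmod p)\<^sup>2 > 0" using \<open>p \<noteq> 0\<close> by simp
  moreover have "t * (t * q - 2) < 0" using t_pos tq by (simp add: mult_pos_neg)
  ultimately show False using mult_pos_neg[of "(cmod p)\<^sup>2" "t * (t * q - 2)"] by linarith
qed

lemma maximisers_lincomb:
  assumes bound: "\<forall>f. qform \<xi> f \<le> \<mu> * l2sq G f"
    and u: "qform \<xi> u = \<mu> * l2sq G u" and v: "qform \<xi> v = \<mu> * l2sq G v"
  shows "qform \<xi> (\<lambda>h. a * u h + b * v h) = \<mu> * l2sq G (\<lambda>h. a * u h + b * v h)"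
proof -
  define u' where "u' = (\<lambda>h. a * u h)"
  define v' where "v' = (\<lambda>h. b * v h)"
  have u': "qform \<xi> u' = \<mu> * l2sq G u'" unfolding u'_def qform_scale l2sq_scale u by simp
  have v': "qform \<xi> v' = \<mu> * l2sq G v'" unfolding v'_def qform_scale l2sq_scale v by simp
  have "of_real \<mu> * l2inner G u' v' - qform_pair \<xi> u' v' = 0"
    using maximiser_first_order[OF bound u'] by simp
  hence "complex_of_real (\<mu> * l2sq G (\<lambda>h. u' h + 1 * v' h) - qform \<xi> (\<lambda>h. u' h + 1 * v' h)) = 0"
    unfolding excess_add_scaled using u' v' by simp
  hence "\<mu> * l2sq G (\<lambda>h. u' h + 1 * v' h) - qform \<xi> (\<lambda>h. u' h + 1 * v' h) = 0"
    by (simp only: of_real_eq_0_iff)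
  thus ?thesis by (simp add: u'_def v'_def)
qed

end

section \<open>From the top eigenvector of the quadratic form to a character\<close>

context finite_group
begin

lemma translation_eigenfunction_character:
  assumes nonzero: "l2sq G f \<noteq> 0"
    and eigen: "\<forall>y\<in>carrier G. \<exists>c. \<forall>h\<in>carrier G. f (y \<otimes> h) = c * f h"
  shows "\<exists>\<phi>. is_character G \<phi> \<and> (\<forall>g\<in>carrier G. \<forall>h\<in>carrier G. f (g \<otimes> h) = \<phi> g * f h)"
proof -
  have f_one: "f \<one> \<noteq> 0"
  proof
    assume "f \<one> = 0"
    have "f y = 0" if y: "y \<in> carrier G" for y
    proof -
      obtain c where "\<forall>h\<in>carrier G. f (y \<otimes> h) = c * f h" using eigen y by blast
      thus ?thesis using y \<open>f \<one> = 0\<close> by (metis one_closed r_one mult_zero_right)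
    qed
    thus False using nonzero l2sq_eq_0_iff[OF finite_carrier] by blast
  qed
  define \<phi> where "\<phi> = (\<lambda>y. f y / f \<one>)"
  have rel: "\<forall>g\<in>carrier G. \<forall>h\<in>carrier G. f (g \<otimes> h) = \<phi> g * f h"
  proof (intro ballI)
    fix g h assume g: "g \<in> carrier G" and h: "h \<in> carrier G"
    obtain c where c: "\<forall>h\<in>carrier G. f (g \<otimes> h) = c * f h" using eigen g by blast
    have "f g = c * f \<one>" using c[rule_format, of \<one>] g by simp
    hence "c = \<phi> g" using f_one by (simp add: \<phi>_def)
    thus "f (g \<otimes> h) = \<phi> g * f h" using c h by simp
  qed
  have "is_character G \<phi>"
    unfolding is_character_def
  proof (intro conjI ballI)
    fix g assume g: "g \<in> carrier G"
    have "l2sq G (\<lambda>h. \<phi> g * f h) = l2sq G (\<lambda>h. f (g \<otimes> h))"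
      using rel g by (intro l2sq_cong) simp
    hence "(cmod (\<phi> g))\<^sup>2 * l2sq G f = l2sq G f"
      unfolding l2sq_scale l2sq_left_translate[OF g] .
    hence "(cmod (\<phi> g))\<^sup>2 = 1" using nonzero by simp
    thus "cmod (\<phi> g) = 1" using norm_ge_zero[of "\<phi> g"] by (simp add: power2_eq_1_iff)
  next
    fix g h assume "g \<in> carrier G" "h \<in> carrier G"
    thus "\<phi> (g \<otimes> h) = \<phi> g * \<phi> h" using rel by (simp add: \<phi>_def)
  qed
  thus ?thesis using rel by blast
qed

text \<open>Spectral separation: if qform is within theta of |<xi, .>|^2 and theta is below the
  maximal value mu, then a maximiser f0 not orthogonal to xi spans the maximal eigenspace;
  since its left translates are maximisers too, they are proportional to f0.\<close>
lemma maximiser_translates_proportional: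
  assumes bound: "\<forall>f. qform \<xi> f \<le> \<mu> * l2sq G f" and f0: "qform \<xi> f0 = \<mu> * l2sq G f0"
    and approx: "\<forall>f. \<bar>qform \<xi> f - (cmod (l2inner G \<xi> f))\<^sup>2\<bar> \<le> \<theta> * l2sq G f"
    and separated: "\<theta> < \<mu>" and not_orth: "l2inner G f0 \<xi> \<noteq> 0"
    and y: "y \<in> carrier G"
  shows "\<exists>c. \<forall>h\<in>carrier G. f0 (y \<otimes> h) = c * f0 h"
proof -
  define v where "v = (\<lambda>h. f0 (y \<otimes> h))"
  have v: "qform \<xi> v = \<mu> * l2sq G v"
    unfolding v_def qform_left_translate[OF y] l2sq_left_translate[OF y] by (rule f0)
  define a where "a = l2inner G v \<xi>"
  define w where "w = (\<lambda>h. a * f0 h + (- l2inner G f0 \<xi>) * v h)"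
  have w: "qform \<xi> w = \<mu> * l2sq G w"
    unfolding w_def by (rule maximisers_lincomb[OF bound f0 v])
  have "l2inner G w \<xi> = 0" unfolding w_def l2inner_lincomb a_def by simp
  hence "l2inner G \<xi> w = 0" using l2inner_cnj[of G w \<xi>] by simp
  hence "(\<mu> - \<theta>) * l2sq G w \<le> 0" using approx[rule_format, of w] w by (simp add: algebra_simps)
  hence "l2sq G w = 0"
    using separated l2sq_nonneg[of G w] by (simp add: mult_le_0_iff)
  hence "\<forall>h\<in>carrier G. a * f0 h = l2inner G f0 \<xi> * f0 (y \<otimes> h)"
    using l2sq_eq_0_iff[OF finite_carrier] by (simp add: w_def v_def)
  hence "\<forall>h\<in>carrier G. f0 (y \<otimes> h) = (a / l2inner G f0 \<xi>) * f0 h"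
    using not_orth by (simp add: field_simps)
  thus ?thesis by blast
qed

lemma character_from_small_defect:
  assumes unit: "l2sq G \<xi> = 1" and small: "sqrt (defect \<xi>) < 1/4"
  shows "\<exists>\<phi> f0. is_character G \<phi> \<and> l2sq G f0 = 1 \<and> (cmod (l2inner G \<xi> f0))\<^sup>2 \<ge> 1/2 \<and>
    (\<forall>g\<in>carrier G. \<forall>h\<in>carrier G. f0 (g \<otimes> h) = \<phi> g * f0 h)"
proof -
  obtain f0 where f0_unit: "l2sq G f0 = 1" and bound: "\<forall>f. qform \<xi> f \<le> qform \<xi> f0 * l2sq G f"
    and dominates: "qform \<xi> \<xi> \<le> qform \<xi> f0"
    using qform_maximiser[OF unit] by blast
  define \<mu> where "\<mu> = qform \<xi> f0"
  define \<theta> where "\<theta> = sqrt (defect \<xi>)"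
  have approx: "\<forall>f. \<bar>qform \<xi> f - (cmod (l2inner G \<xi> f))\<^sup>2\<bar> \<le> \<theta> * l2sq G f"
    using qform_approx \<theta>_def by blast
  have "l2inner G \<xi> \<xi> = 1" using l2sq_as_inner[of G \<xi>] unit by simp
  hence "\<mu> \<ge> 1 - \<theta>" using approx[rule_format, of \<xi>] unit dominates \<mu>_def by simp
  hence large: "(cmod (l2inner G \<xi> f0))\<^sup>2 \<ge> 1/2"
    using approx[rule_format, of f0] f0_unit small \<mu>_def \<theta>_def by simp
  hence not_orth: "l2inner G f0 \<xi> \<noteq> 0" using l2inner_cnj[of G f0 \<xi>] by auto
  have separated: "\<theta> < \<mu>" using \<open>\<mu> \<ge> 1 - \<theta>\<close> small \<theta>_def by simp
  have "\<forall>f. qform \<xi> f \<le> \<mu> * l2sq G f" using bound by (simp add: \<mu>_def)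
  moreover have "qform \<xi> f0 = \<mu> * l2sq G f0" using f0_unit by (simp add: \<mu>_def)
  ultimately have "\<forall>y\<in>carrier G. \<exists>c. \<forall>h\<in>carrier G. f0 (y \<otimes> h) = c * f0 h"
    using maximiser_translates_proportional approx separated not_orth by blast
  then obtain \<phi> where "is_character G \<phi>" "\<forall>g\<in>carrier G. \<forall>h\<in>carrier G. f0 (g \<otimes> h) = \<phi> g * f0 h"
    using translation_eigenfunction_character[of f0] f0_unit by auto
  thus ?thesis using f0_unit large by blast
qed

text \<open>Step 4 of the proof: if f0 transforms under left translation by the character phi,
  then lambda(g) xi has inner product cnj (phi g) <xi, f0> with f0, so the distance of
  alpha g from cnj (phi g) is controlled by the almost-invariance of xi.\<close>
lemma character_eigenvalue_error:
  assumes g: "g \<in> carrier G" and f0_unit: "l2sq G f0 = 1"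
    and rel: "\<forall>g\<in>carrier G. \<forall>h\<in>carrier G. f0 (g \<otimes> h) = \<phi> g * f0 h"
  shows "cmod (cnj (\<phi> g) - a) * cmod (l2inner G \<xi> f0) \<le> l2norm G (\<lambda>h. lreg G g \<xi> h - a * \<xi> h)"
proof -
  have "l2inner G (lreg G g \<xi>) f0
      = (\<Sum>h\<in>carrier G. (\<lambda>k. \<xi> (inv g \<otimes> k) * cnj (f0 k)) (g \<otimes> h))"
    unfolding l2inner_def lreg_def
    using sum_left_translate[OF g, of "\<lambda>k. \<xi> (inv g \<otimes> k) * cnj (f0 k)"] by simp
  also have "\<dots> = cnj (\<phi> g) * l2inner G \<xi> f0"
    unfolding l2inner_def sum_distrib_left using g rel
    by (intro sum.cong refl) (simp add: m_assoc[symmetric])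
  finally have "l2inner G (\<lambda>h. 1 * lreg G g \<xi> h + (- a) * \<xi> h) f0
      = (cnj (\<phi> g) - a) * l2inner G \<xi> f0"
    unfolding l2inner_lincomb by (simp add: algebra_simps)
  hence "cmod (cnj (\<phi> g) - a) * cmod (l2inner G \<xi> f0)
      \<le> l2norm G (\<lambda>h. lreg G g \<xi> h - a * \<xi> h) * l2norm G f0"
    using l2inner_Cauchy_Schwarz[of G "\<lambda>h. lreg G g \<xi> h - a * \<xi> h" f0]
    by (simp add: norm_mult)
  thus ?thesis using f0_unit by (simp add: l2norm_eq_sqrt)
qed

end

context averaging
begin

lemma almost_invariant_near_character:
  assumes gap_lt_1: "lambda0_avg_norm G S < 1" and unit: "l2sq G \<xi> = 1"
    and unimodular: "\<forall>g\<in>S. cmod (\<alpha> g) = 1"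
    and almost_inv: "\<forall>g\<in>S. l2norm G (\<lambda>h. lreg G g \<xi> h - \<alpha> g * \<xi> h) \<le> \<epsilon>"
    and small: "8 * \<epsilon> < 1 - lambda0_avg_norm G S"
  shows "\<exists>\<phi>. is_character G \<phi> \<and> (\<forall>g\<in>S. (cmod (cnj (\<phi> g) - \<alpha> g))\<^sup>2 \<le> 2 * \<epsilon>\<^sup>2)"
proof -
  define \<delta> where "\<delta> = lambda0_avg_norm G S"
  have "\<epsilon> \<ge> 0" using almost_inv S_ne l2norm_nonneg by (meson all_not_in_conv order_trans)
  have "(1 - \<delta>)\<^sup>2 * defect \<xi> \<le> (2 * \<epsilon>)\<^sup>2"
    using defect_bound[OF gap_lt_1 unit unimodular almost_inv] by (simp add: \<delta>_def power_mult_distrib)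
  hence "sqrt ((1 - \<delta>)\<^sup>2 * defect \<xi>) \<le> sqrt ((2 * \<epsilon>)\<^sup>2)"
    by (rule real_sqrt_le_mono)
  hence "(1 - \<delta>) * sqrt (defect \<xi>) \<le> 2 * \<epsilon>"
    using gap_lt_1 \<open>\<epsilon> \<ge> 0\<close> by (simp add: \<delta>_def real_sqrt_mult)
  hence "(1 - \<delta>) * sqrt (defect \<xi>) < (1 - \<delta>) * (1/4)"
    using small \<delta>_def by simp
  hence "sqrt (defect \<xi>) < 1/4"
    using gap_lt_1 \<delta>_def by simp
  then obtain \<phi> f0 where "is_character G \<phi>" and f0_unit: "l2sq G f0 = 1"
    and large: "(cmod (l2inner G \<xi> f0))\<^sup>2 \<ge> 1/2"
    and rel: "\<forall>g\<in>carrier G. \<forall>h\<in>carrier G. f0 (g \<otimes> h) = \<phi> g * f0 h"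
    using character_from_small_defect[OF unit] by blast
  have "(cmod (cnj (\<phi> g) - \<alpha> g))\<^sup>2 \<le> 2 * \<epsilon>\<^sup>2" if g: "g \<in> S" for g
  proof -
    have "cmod (cnj (\<phi> g) - \<alpha> g) * cmod (l2inner G \<xi> f0) \<le> \<epsilon>"
      using character_eigenvalue_error[OF _ f0_unit rel] g S_sub almost_inv by (meson order_trans subsetD)
    hence "(cmod (cnj (\<phi> g) - \<alpha> g) * cmod (l2inner G \<xi> f0))\<^sup>2 \<le> \<epsilon>\<^sup>2"
      by (intro power_mono) auto
    hence "(cmod (cnj (\<phi> g) - \<alpha> g))\<^sup>2 * (cmod (l2inner G \<xi> f0))\<^sup>2 \<le> \<epsilon>\<^sup>2"
      by (simp add: power_mult_distrib)
    moreover have "(cmod (cnj (\<phi> g) - \<alpha> g))\<^sup>2 * (1/2)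
        \<le> (cmod (cnj (\<phi> g) - \<alpha> g))\<^sup>2 * (cmod (l2inner G \<xi> f0))\<^sup>2"
      using large by (intro mult_left_mono) auto
    ultimately show ?thesis by simp
  qed
  thus ?thesis using \<open>is_character G \<phi>\<close> by blast
qed

end

lemma sqrt_bound_small_case:
  fixes \<epsilon> \<delta> x :: real
  assumes "\<epsilon> > 0" "0 \<le> \<delta>" "8 * \<epsilon> < 1 - \<delta>" "x\<^sup>2 \<le> 2 * \<epsilon>\<^sup>2"
  shows "x \<le> sqrt (100 * \<epsilon> / (1 - \<delta>))"
proof (rule real_le_rsqrt)
  have "2 * \<epsilon>\<^sup>2 \<le> \<epsilon> * 1" using assms by (simp add: power2_eq_square)
  also have "\<dots> \<le> \<epsilon> * (100 / (1 - \<delta>))" using assms by (intro mult_left_mono) auto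
  also have "\<dots> = 100 * \<epsilon> / (1 - \<delta>)" by simp
  finally show "x\<^sup>2 \<le> 100 * \<epsilon> / (1 - \<delta>)" using assms(4) by linarith
qed

lemma sqrt_bound_large_case:
  fixes \<epsilon> \<delta> x :: real
  assumes "\<delta> < 1" "1 - \<delta> \<le> 8 * \<epsilon>" "x \<le> 2"
  shows "x \<le> sqrt (100 * \<epsilon> / (1 - \<delta>))"
proof -
  have "4 \<le> 100 * \<epsilon> / (1 - \<delta>)" using assms by (simp add: field_simps)
  hence "sqrt 4 \<le> sqrt (100 * \<epsilon> / (1 - \<delta>))" by (rule real_sqrt_le_mono)
  thus ?thesis using assms(3) by simp
qed

theorem lemmaA4:
  fixes G :: "('a, 'b) monoid_scheme" and S :: "'a set"
    and \<alpha> :: "'a \<Rightarrow> complex" and \<xi> :: "'a \<Rightarrow> complex"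
  assumes "group G" and "finite (carrier G)"
    and "S \<subseteq> carrier G" and "S \<noteq> {}"
    and "\<forall>g\<in>S. inv\<^bsub>G\<^esub> g \<in> S"
    and "generate G S = carrier G"
    and "lambda0_avg_norm G S < 1"
    and "\<forall>g\<in>S. cmod (\<alpha> g) = 1"
    and "l2norm G \<xi> = 1"
    and "Max ((\<lambda>g. l2norm G (\<lambda>h. lreg G g \<xi> h - \<alpha> g * \<xi> h)) ` S) > 0"
  shows "\<exists>\<phi>. is_character G \<phi> \<and>
    (\<forall>g\<in>S. cmod (cnj (\<phi> g) - \<alpha> g) \<le>
      sqrt (100 * Max ((\<lambda>g. l2norm G (\<lambda>h. lreg G g \<xi> h - \<alpha> g * \<xi> h)) ` S)
            / (1 - lambda0_avg_norm G S)))"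
proof -
  interpret averaging G S
    using assms(1-4) by (intro averaging.intro finite_group.intro finite_group_axioms.intro
        averaging_axioms.intro)
  define \<epsilon> where "\<epsilon> = Max ((\<lambda>g. l2norm G (\<lambda>h. lreg G g \<xi> h - \<alpha> g * \<xi> h)) ` S)"
  define \<delta> where "\<delta> = lambda0_avg_norm G S"
  have almost_inv: "\<forall>g\<in>S. l2norm G (\<lambda>h. lreg G g \<xi> h - \<alpha> g * \<xi> h) \<le> \<epsilon>"
    unfolding \<epsilon>_def using finite_S by simp
  have unit: "l2sq G \<xi> = 1" using assms(9) l2norm_squared[of G \<xi>] by simp
  have "0 \<le> \<delta>" "\<delta> < 1" using lambda0_avg_norm_nonneg assms(7) by (auto simp: \<delta>_def)
  show ?thesis
  proof (cases "8 * \<epsilon> < 1 - \<delta>")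
    case True
    then obtain \<phi> where "is_character G \<phi>" "\<forall>g\<in>S. (cmod (cnj (\<phi> g) - \<alpha> g))\<^sup>2 \<le> 2 * \<epsilon>\<^sup>2"
      using almost_invariant_near_character[OF assms(7) unit assms(8) almost_inv] by (auto simp: \<delta>_def)
    thus ?thesis
      using sqrt_bound_small_case[of \<epsilon> \<delta>] True \<open>0 \<le> \<delta>\<close> assms(10)
      unfolding \<epsilon>_def \<delta>_def by auto
  next
    case False
    have "cmod (cnj 1 - \<alpha> g) \<le> 2" if "g \<in> S" for g
      using norm_triangle_ineq4[of 1 "\<alpha> g"] assms(8) that by simp
    moreover have "is_character G (\<lambda>_. 1)" by (simp add: is_character_def)
    ultimately show ?thesis
      using sqrt_bound_large_case[of \<delta> \<epsilon>] False \<open>\<delta> < 1\<close> unfolding \<epsilon>_def \<delta>_def by auto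
  qed
qed

end
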